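(* Let $f\colon X\to Y$ be a standard proper map between standard coarse spaces, where $X$ is non-empty and $Y$ is connected. If ${}^*f\colon\partial_SX\to\partial_SY$ is coarsely surjective, then $f$ is coarsely surjective.
   Context: Nonstandard framework with transfer and sufficient saturation. Coarse structure $\mathcal{C}_X$: family of subsets of $X\times X$ containing the diagonal, closed under subsets, finite unions, inverses, compositions; connected if every singleton $\{(x,y)\}$ is controlled. Induced prebornology $\mathcal{B}_X=\{B:B\times B\in\mathcal{C}_X\}$; proper map: preimages of bounded sets are bounded. $\mathrm{INF}(X)={}^*X\setminus\bigcup_{B\in\mathcal{B}_X}{}^*B$; $\partial_SX$ is $\mathrm{INF}(X)$ with coarse structure $\{E\subseteq\mathrm{INF}(X)^2:E\subseteq{}^*F,\ F\in\mathcal{C}_X\}$. A map $g\colon Z\to W$ of coarse spaces is coarsely surjective if $E[g(Z)]=W$ for some controlled $E$ of $W$ (here ${}^*f$ is regarded as a map $\partial_SX\to\partial_SY$, assuming it maps $\mathrm{INF}(X)$ into $\mathrm{INF}(Y)$). *)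

theory Defs
  imports Main
begin

definition coarse_structure :: "'a set \<Rightarrow> ('a \<times> 'a) set set \<Rightarrow> bool" where
  "coarse_structure X C \<longleftrightarrow>
     (\<forall>E\<in>C. E \<subseteq> X \<times> X) \<and>
     Id_on X \<in> C \<and>
     (\<forall>E\<in>C. \<forall>E'. E' \<subseteq> E \<longrightarrow> E' \<in> C) \<and>
     (\<forall>E\<in>C. \<forall>F\<in>C. E \<union> F \<in> C) \<and>
     (\<forall>E\<in>C. E\<inverse> \<in> C) \<and>
     (\<forall>E\<in>C. \<forall>F\<in>C. E O F \<in> C)"

definition coarse_connected :: "'a set \<Rightarrow> ('a \<times> 'a) set set \<Rightarrow> bool" where
  "coarse_connected X C \<longleftrightarrow> (\<forall>x\<in>X. \<forall>y\<in>X. {(x, y)} \<in> C)"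

definition bounded_sets :: "'a set \<Rightarrow> ('a \<times> 'a) set set \<Rightarrow> 'a set set" where
  "bounded_sets X C = {B. B \<subseteq> X \<and> B \<times> B \<in> C}"

definition proper_map ::
  "'a set \<Rightarrow> ('a \<times> 'a) set set \<Rightarrow> 'b set \<Rightarrow> ('b \<times> 'b) set set \<Rightarrow> ('a \<Rightarrow> 'b) \<Rightarrow> bool" where
  "proper_map X CX Y CY f \<longleftrightarrow>
     f ` X \<subseteq> Y \<and> (\<forall>B\<in>bounded_sets Y CY. f -` B \<inter> X \<in> bounded_sets X CX)"

definition coarsely_surjective ::
  "'c set \<Rightarrow> 'd set \<Rightarrow> ('d \<times> 'd) set set \<Rightarrow> ('c \<Rightarrow> 'd) \<Rightarrow> bool" where
  "coarsely_surjective Z W CW g \<longleftrightarrow> (\<exists>E\<in>CW. E `` (g ` Z) = W)"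

definition is_ultrafilter :: "'i filter \<Rightarrow> bool" where
  "is_ultrafilter U \<longleftrightarrow> U \<noteq> bot \<and>
     (\<forall>A. eventually (\<lambda>i. i \<in> A) U \<or> eventually (\<lambda>i. i \<notin> A) U)"

text \<open>Nonstandard elements are represented by functions 'i => 'a (modulo U);
  all sets below are closed under U-almost-everywhere equality.\<close>

definition star_set :: "'i filter \<Rightarrow> 'a set \<Rightarrow> ('i \<Rightarrow> 'a) set" where
  "star_set U A = {u. eventually (\<lambda>i. u i \<in> A) U}"

definition star_rel :: "'i filter \<Rightarrow> ('a \<times> 'a) set \<Rightarrow> (('i \<Rightarrow> 'a) \<times> ('i \<Rightarrow> 'a)) set" where
  "star_rel U E = {(u, v). eventually (\<lambda>i. (u i, v i) \<in> E) U}"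

definition star_fun :: "('a \<Rightarrow> 'b) \<Rightarrow> ('i \<Rightarrow> 'a) \<Rightarrow> ('i \<Rightarrow> 'b)" where
  "star_fun f u = f \<circ> u"

definition internal_set :: "'i filter \<Rightarrow> ('i \<Rightarrow> 'a set) \<Rightarrow> ('i \<Rightarrow> 'a) set" where
  "internal_set U A = {u. eventually (\<lambda>i. u i \<in> A i) U}"

definition saturated_for :: "'i filter \<Rightarrow> 'b itself \<Rightarrow> bool" where
  "saturated_for U (_ :: 'b itself) \<longleftrightarrow>
     (\<forall>(J :: ('b \<times> 'b) set set) (A :: ('b \<times> 'b) set \<Rightarrow> 'i \<Rightarrow> 'b set).
        (\<forall>J0. finite J0 \<and> J0 \<subseteq> J \<longrightarrow> (\<Inter>j\<in>J0. internal_set U (A j)) \<noteq> {}) \<longrightarrow>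
        (\<Inter>j\<in>J. internal_set U (A j)) \<noteq> {})"

definition INF_pts :: "'i filter \<Rightarrow> 'a set \<Rightarrow> ('a \<times> 'a) set set \<Rightarrow> ('i \<Rightarrow> 'a) set" where
  "INF_pts U X C = star_set U X - (\<Union>B\<in>bounded_sets X C. star_set U B)"

definition boundary_structure ::
  "'i filter \<Rightarrow> 'a set \<Rightarrow> ('a \<times> 'a) set set \<Rightarrow> (('i \<Rightarrow> 'a) \<times> ('i \<Rightarrow> 'a)) set set" where
  "boundary_structure U X C =
     {E. E \<subseteq> INF_pts U X C \<times> INF_pts U X C \<and> (\<exists>F\<in>C. E \<subseteq> star_rel U F)}"

end

theory Submission
  imports Defs
begin

text \<open>If f(X) were not coarsely dense in Y, then for every finite family of controlled sets
  some point of Y would lie outside all their neighbourhoods of f(X); by saturation there is a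
  nonstandard point y that is far from f(X) with respect to every controlled set at once.
  Connectedness makes bounded sets lie in a controlled neighbourhood of f(X), so y is infinite.
  Coarse surjectivity of *f on the boundary puts y F-close to some *f(u) with u in *X,
  contradicting the choice of y.\<close>

lemma coarse_structure_Union_finite:
  assumes "coarse_structure Y C" and "finite J" and "J \<subseteq> C"
  shows "\<Union>J \<in> C"
  using assms(2,3)
proof (induction J rule: finite_induct)
  case empty
  have "Id_on Y \<in> C" and "\<forall>E\<in>C. \<forall>E'. E' \<subseteq> E \<longrightarrow> E' \<in> C"
    using assms(1) by (simp_all add: coarse_structure_def)
  then show ?case by blast
next
  case (insert E J)
  then show ?case using assms(1) by (simp add: coarse_structure_def)
qed

lemma not_coarsely_surjective_far_point:
  assumes "coarse_structure Y C" and "\<not> coarsely_surjective X Y C f" and "E \<in> C"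
  obtains y where "y \<in> Y" and "y \<notin> E `` (f ` X)"
proof -
  have "E `` (f ` X) \<subseteq> Y" using assms(1,3) by (auto simp: coarse_structure_def)
  moreover have "E `` (f ` X) \<noteq> Y" using assms(2,3) by (auto simp: coarsely_surjective_def)
  ultimately show thesis using that by blast
qed

text \<open>Constant sequences witness the finite intersection property of the internal sets.\<close>
lemma saturated_standard_sets:
  fixes J :: "('b \<times> 'b) set set" and S :: "('b \<times> 'b) set \<Rightarrow> 'b set"
  assumes "saturated_for U TYPE('b)"
    and "\<And>J0. finite J0 \<Longrightarrow> J0 \<subseteq> J \<Longrightarrow> (\<Inter>j\<in>J0. S j) \<noteq> {}"
  obtains u :: "'i \<Rightarrow> 'b" where "\<And>j. j \<in> J \<Longrightarrow> eventually (\<lambda>i. u i \<in> S j) U"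
proof -
  have "(\<Inter>j\<in>J0. internal_set U (\<lambda>_. S j)) \<noteq> {}" if J0: "finite J0" "J0 \<subseteq> J" for J0
  proof -
    obtain y where "y \<in> (\<Inter>j\<in>J0. S j)" using assms(2)[OF J0] by blast
    then have "(\<lambda>_. y) \<in> (\<Inter>j\<in>J0. internal_set U (\<lambda>_. S j))"
      by (simp add: internal_set_def)
    then show ?thesis by blast
  qed
  then have "(\<Inter>j\<in>J. internal_set U (\<lambda>_. S j)) \<noteq> {}"
    using assms(1)[unfolded saturated_for_def, rule_format, of J "\<lambda>j _. S j"] by blast
  then show thesis using that by (auto simp: internal_set_def)
qed

lemma bounded_subset_controlled_Image:
  assumes "coarse_structure Y C" and "coarse_connected Y C"
    and "B \<in> bounded_sets Y C" and "a \<in> A" and "A \<subseteq> Y"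
  obtains E where "E \<in> C" and "B \<subseteq> E `` A"
proof (cases "B = {}")
  case True
  then show thesis using that assms(1) by (auto simp: coarse_structure_def)
next
  case False
  then obtain b where b: "b \<in> B" by blast
  have B: "B \<times> B \<in> C" "B \<subseteq> Y" using assms(3) by (auto simp: bounded_sets_def)
  have "{(a, b)} \<in> C" using assms(2,4,5) b B(2) by (auto simp: coarse_connected_def)
  then have "{(a, b)} O (B \<times> B) \<in> C" using B(1) assms(1) unfolding coarse_structure_def by blast
  moreover have "B \<subseteq> ({(a, b)} O (B \<times> B)) `` A" using assms(4) b by blast
  ultimately show thesis using that by blast
qed

lemma far_point_in_INF_pts:
  assumes "U \<noteq> bot" and "coarse_structure Y C" and "coarse_connected Y C"
    and "A \<noteq> {}" and "A \<subseteq> Y"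
    and far: "\<And>E. E \<in> C \<Longrightarrow> eventually (\<lambda>i. y i \<in> Y - E `` A) U"
  shows "y \<in> INF_pts U Y C"
proof -
  have "Id_on Y \<in> C" using assms(2) by (simp add: coarse_structure_def)
  from far[OF this] have "eventually (\<lambda>i. y i \<in> Y) U" by (rule eventually_mono) simp
  then have "y \<in> star_set U Y" by (simp add: star_set_def)
  moreover have "y \<notin> star_set U B" if B: "B \<in> bounded_sets Y C" for B
  proof
    assume yB: "y \<in> star_set U B"
    obtain a where "a \<in> A" using assms(4) by blast
    then obtain E where E: "E \<in> C" and "B \<subseteq> E `` A"
      using bounded_subset_controlled_Image[OF assms(2,3) B _ assms(5)] by blast
    have "eventually (\<lambda>i. False) U"
      using far[OF E] yB[unfolded star_set_def, simplified]
      by (rule eventually_elim2) (use \<open>B \<subseteq> E `` A\<close> in blast)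
    then show False using assms(1) by simp
  qed
  ultimately show ?thesis by (auto simp: INF_pts_def)
qed

lemma boundary_coarsely_surjective_near_image:
  assumes "coarsely_surjective (INF_pts U X CX) (INF_pts U Y CY) (boundary_structure U Y CY)
             (star_fun f)"
    and "y \<in> INF_pts U Y CY"
  obtains F where "F \<in> CY" and "eventually (\<lambda>i. y i \<in> F `` (f ` X)) U"
proof -
  obtain E where E: "E \<in> boundary_structure U Y CY"
    and surj: "E `` (star_fun f ` INF_pts U X CX) = INF_pts U Y CY"
    using assms(1) by (auto simp: coarsely_surjective_def)
  obtain F where F: "F \<in> CY" "E \<subseteq> star_rel U F" using E by (auto simp: boundary_structure_def)
  obtain u where u: "u \<in> INF_pts U X CX" "(star_fun f u, y) \<in> E" using assms(2) surj by blast
  have "eventually (\<lambda>i. u i \<in> X) U" using u(1) by (simp add: INF_pts_def star_set_def)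
  moreover have "eventually (\<lambda>i. (f (u i), y i) \<in> F) U"
    using u(2) F(2) by (auto simp: star_rel_def star_fun_def)
  ultimately have "eventually (\<lambda>i. y i \<in> F `` (f ` X)) U"
    by (rule eventually_elim2) blast
  with F(1) show thesis using that by blast
qed

theorem mainTheorem14:
  fixes U :: "'i filter"
    and X :: "'a set" and CX :: "('a \<times> 'a) set set"
    and Y :: "'b set" and CY :: "('b \<times> 'b) set set"
    and f :: "'a \<Rightarrow> 'b"
  assumes "is_ultrafilter U"
    and "saturated_for U TYPE('b)"
    and "coarse_structure X CX"
    and "coarse_structure Y CY"
    and "X \<noteq> {}"
    and "coarse_connected Y CY"
    and "proper_map X CX Y CY f"
    and "coarsely_surjective (INF_pts U X CX) (INF_pts U Y CY) (boundary_structure U Y CY) (star_fun f)"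
  shows "coarsely_surjective X Y CY f"
proof (rule ccontr)
  assume not_surj: "\<not> coarsely_surjective X Y CY f"
  have "(\<Inter>E\<in>J0. Y - E `` (f ` X)) \<noteq> {}" if J0: "finite J0" "J0 \<subseteq> CY" for J0
  proof -
    obtain y where "y \<in> Y" "y \<notin> \<Union>J0 `` (f ` X)"
      using not_coarsely_surjective_far_point[OF assms(4) not_surj
              coarse_structure_Union_finite[OF assms(4) J0]] .
    then show ?thesis by blast
  qed
  then obtain y :: "'i \<Rightarrow> 'b"
    where far: "\<And>E. E \<in> CY \<Longrightarrow> eventually (\<lambda>i. y i \<in> Y - E `` (f ` X)) U"
    using saturated_standard_sets[OF assms(2), of CY "\<lambda>E. Y - E `` (f ` X)"] by blast
  have U: "U \<noteq> bot" using assms(1) by (simp add: is_ultrafilter_def)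
  have "f ` X \<noteq> {}" using assms(5) by blast
  moreover have "f ` X \<subseteq> Y" using assms(7) by (simp add: proper_map_def)
  ultimately have "y \<in> INF_pts U Y CY"
    using far by (rule far_point_in_INF_pts[OF U assms(4,6)])
  then obtain F where "F \<in> CY" and near: "eventually (\<lambda>i. y i \<in> F `` (f ` X)) U"
    using boundary_coarsely_surjective_near_image[OF assms(8)] by blast
  from far[OF \<open>F \<in> CY\<close>] near have "eventually (\<lambda>i. False) U"
    by (rule eventually_elim2) simp
  then show False using U by simp
qed

end
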